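(* Let $A$ be an entire function of finite order $\rho$ whose zero set is $T$. Then for any $\varepsilon>0$ there exists a set $E\subset(0,\infty)$ of zero linear density (i.e. $|E\cap(0,R)|=o(R)$ as $R\to\infty$) such that for every integer $k\ge0$ and every entire function $f$ of the form $f=A\,\mathcal{C}_{a,k}$ there is a constant $C=C(f)$ with $$|f(z)|\le C|z|^{\rho+k+1+\varepsilon}|A(z)|,\qquad |z|\ge1,\ |z|\notin E.$$ In particular, if $A$ is of order $\rho$ and type $\sigma$, then every element of $\mathcal{H}(T,A,\mu)$ is of order at most $\rho$ and of type at most $\sigma$ with respect to this order.
   Context: $T=\{t_n\}\subset\mathbb{C}$ pairwise distinct, $0\notin T$, $|t_n|\to\infty$. For integer $k\ge0$ and complex $a=\{a_n\}$ with $\sum_n|t_n|^{-k-1}|a_n|<\infty$, $\mathcal{C}_{a,k}(z)=z^k\sum_n\frac{a_n}{t_n^k(z-t_n)}$. Cauchy--de Branges space (for $A$ with simple zeros exactly at $T$ and $\mu_n>0$ with $\sum_n\mu_n/(|t_n|^2+1)<\infty$): $\mathcal{H}(T,A,\mu)=\{A(z)\sum_n\frac{a_n\mu_n^{1/2}}{z-t_n}: a\in\ell^2\}$ with norm $\|a\|_{\ell^2}$. *)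

theory Defs
  imports "HOL-Analysis.Analysis"
begin

definition entire_order :: "(complex \<Rightarrow> complex) \<Rightarrow> ereal" where
  "entire_order f = (INF s \<in> {s::real. 0 \<le> s \<and>
      (\<exists>R. \<forall>z. R \<le> norm z \<longrightarrow> norm (f z) \<le> exp (norm z powr s))}. ereal s)"

definition entire_type :: "real \<Rightarrow> (complex \<Rightarrow> complex) \<Rightarrow> ereal" where
  "entire_type \<rho> f = (INF \<tau> \<in> {\<tau>::real. 0 \<le> \<tau> \<and>
      (\<exists>R. \<forall>z. R \<le> norm z \<longrightarrow> norm (f z) \<le> exp (\<tau> * norm z powr \<rho>))}. ereal \<tau>)"

definition cauchy_transform ::
  "(nat \<Rightarrow> complex) \<Rightarrow> (nat \<Rightarrow> complex) \<Rightarrow> nat \<Rightarrow> complex \<Rightarrow> complex" where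
  "cauchy_transform t a k z = z ^ k * (\<Sum>n. a n / (t n ^ k * (z - t n)))"

definition cdb_space ::
  "(nat \<Rightarrow> complex) \<Rightarrow> (complex \<Rightarrow> complex) \<Rightarrow> (nat \<Rightarrow> real) \<Rightarrow> (complex \<Rightarrow> complex) set" where
  "cdb_space t A \<mu> = {g. g holomorphic_on UNIV \<and>
      (\<exists>a::nat \<Rightarrow> complex. summable (\<lambda>n. (norm (a n))\<^sup>2) \<and>
        (\<forall>z. z \<notin> range t \<longrightarrow>
           g z = A z * (\<Sum>n. a n * complex_of_real (sqrt (\<mu> n)) / (z - t n))))}"

end

theory Submission
  imports Defs "HOL-Complex_Analysis.Complex_Analysis" "HOL-Real_Asymp.Real_Asymp"
begin

text \<open>Dividing out the zeros and applying the maximum modulus principle shows that \<open>A\<close> has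
  \<open>O(r^s)\<close> zeros in the disc of radius \<open>r\<close> for every \<open>s > \<rho>\<close>, so \<open>\<Sum> |t_n|^(-\<rho>-\<epsilon>) < \<infinity>\<close>.
  Removing from \<open>(0, \<infinity>)\<close> the intervals of radius \<open>|t_n|^(-\<rho>-\<epsilon>)\<close> around the \<open>|t_n|\<close> leaves out a
  set \<open>E\<close> of finite measure, hence of zero density, and for \<open>|z| \<notin> E\<close> every term of the Cauchy
  transform is at most a constant times \<open>|z|^(1+\<rho>+\<epsilon>) |a_n| / |t_n|^(k+1)\<close>.

  An element of \<open>\<H>(T,A,\<mu>)\<close> is \<open>A\<close> times a Cauchy transform with \<open>k = 0\<close>, the summability of
  \<open>|a_n| \<mu>_n^(1/2) / |t_n|\<close> coming from AM-GM. As \<open>E\<close> has finite measure, every interval of a fixed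
  length contains a radius outside \<open>E\<close>; the maximum modulus principle on such circles turns
  \<open>|g| \<le> C |z|^(\<rho>+2) |A|\<close> into a bound on whole discs, at a cost invisible to order and type.\<close>

lemma entire_order_nonneg: "0 \<le> entire_order f"
  unfolding entire_order_def zero_ereal_def by (rule INF_greatest) auto

lemma entire_order_less_imp_bound:
  assumes "entire_order f < ereal s"
  shows "\<exists>R\<ge>1. \<forall>z. R \<le> norm z \<longrightarrow> norm (f z) \<le> exp (norm z powr s)"
proof -
  obtain s' R where s': "0 \<le> s'" "s' < s"
    and R: "\<forall>z. R \<le> norm z \<longrightarrow> norm (f z) \<le> exp (norm z powr s')"
    using assms unfolding entire_order_def INF_less_iff by auto
  show ?thesis
  proof (intro exI[of _ "max R 1"] conjI allI impI)
    fix z :: complex assume z: "max R 1 \<le> norm z"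
    have "norm (f z) \<le> exp (norm z powr s')" using R z by auto
    also have "\<dots> \<le> exp (norm z powr s)" using z s' by (auto intro!: powr_mono)
    finally show "norm (f z) \<le> exp (norm z powr s)" .
  qed auto
qed

lemma holomorphic_factor_finite_zeros:
  fixes A :: "complex \<Rightarrow> complex"
  assumes "A holomorphic_on UNIV" "finite Z" "\<And>w. w \<in> Z \<Longrightarrow> A w = 0"
  shows "\<exists>h. h holomorphic_on UNIV \<and> (\<forall>z. z \<notin> Z \<longrightarrow> h z * (\<Prod>w\<in>Z. (z - w)) = A z)"
  using assms(2,3)
proof (induction Z rule: finite_induct)
  case empty
  thus ?case using assms(1) by (intro exI[of _ A]) auto
next
  case (insert a Z)
  then obtain h where h: "h holomorphic_on UNIV" "\<forall>z. z \<notin> Z \<longrightarrow> h z * (\<Prod>w\<in>Z. (z - w)) = A z"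
    by auto
  have "h a * (\<Prod>w\<in>Z. (a - w)) = 0" "(\<Prod>w\<in>Z. (a - w)) \<noteq> 0"
    using h(2) insert by auto
  hence ha: "h a = 0" by simp
  define h' where "h' = (\<lambda>z. if z = a then deriv h a else (h z - h a) / (z - a))"
  have "h' holomorphic_on UNIV" unfolding h'_def by (rule pole_lemma[OF h(1)]) auto
  moreover have "h' z * (\<Prod>w\<in>insert a Z. (z - w)) = A z" if "z \<notin> insert a Z" for z
    using that h(2) insert ha by (simp add: h'_def)
  ultimately show ?case by blast
qed

text \<open>Each zero in the disc of radius \<open>R/4\<close> actually costs a factor \<open>3\<close>: it contributes at
  least \<open>3R/4\<close> on the circle and at most \<open>R/4\<close> at the origin.\<close>

lemma card_zeros_in_quarter_disc_le:
  fixes A :: "complex \<Rightarrow> complex"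
  assumes hol: "A holomorphic_on UNIV" and fin: "finite Z" and zer: "\<And>w. w \<in> Z \<Longrightarrow> A w = 0"
    and A0: "A 0 \<noteq> 0" and R: "R > 0" and Zs: "\<And>w. w \<in> Z \<Longrightarrow> norm w \<le> R / 4"
    and M: "\<And>z. norm z = R \<Longrightarrow> norm (A z) \<le> M"
  shows "norm (A 0) * 2 ^ card Z \<le> M"
proof -
  obtain h where h: "h holomorphic_on UNIV" "\<forall>z. z \<notin> Z \<longrightarrow> h z * (\<Prod>w\<in>Z. (z - w)) = A z"
    using holomorphic_factor_finite_zeros[OF hol fin zer] by blast
  have "0 \<notin> Z" using A0 zer by auto
  have h_circle: "norm (h z) \<le> M / (3*R/4) ^ card Z" if z: "norm z = R" for z
  proof -
    have "z \<notin> Z" using Zs z R by fastforce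
    have "(\<Prod>w\<in>Z. 3*R/4) \<le> (\<Prod>w\<in>Z. norm (z - w))"
    proof (rule prod_mono)
      fix w assume "w \<in> Z"
      hence "norm w \<le> R/4" by (rule Zs)
      moreover have "norm z - norm w \<le> norm (z - w)" by (rule norm_triangle_ineq2)
      ultimately show "0 \<le> 3*R/4 \<and> 3*R/4 \<le> norm (z - w)" using z R by auto
    qed
    hence "(3*R/4) ^ card Z \<le> (\<Prod>w\<in>Z. norm (z - w))" by simp
    moreover have "norm (h z) * (\<Prod>w\<in>Z. norm (z - w)) = norm (A z)"
      using arg_cong[OF h(2)[rule_format, OF \<open>z \<notin> Z\<close>], of norm] by (simp add: norm_mult prod_norm)
    ultimately have "norm (h z) * (3*R/4) ^ card Z \<le> M"
      using M[OF z] by (smt (verit) mult_left_mono norm_ge_zero)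
    thus ?thesis using R by (simp add: field_simps)
  qed
  have "norm (h 0) \<le> M / (3*R/4) ^ card Z"
  proof (rule maximum_modulus_frontier[of h "cball 0 R"])
    show "h holomorphic_on interior (cball 0 R)" using h(1) by (rule holomorphic_on_subset) auto
    show "continuous_on (closure (cball 0 R)) h"
      using h(1) holomorphic_on_imp_continuous_on by (metis continuous_on_subset top_greatest)
  qed (use R h_circle in auto)
  moreover have "norm (h 0) * (\<Prod>w\<in>Z. norm w) = norm (A 0)"
  proof -
    have "norm (h 0) * (\<Prod>w\<in>Z. norm (0 - w)) = norm (A 0)"
      using arg_cong[OF h(2)[rule_format, OF \<open>0 \<notin> Z\<close>], of norm] by (simp only: norm_mult prod_norm)
    thus ?thesis by simp
  qed
  moreover have "(\<Prod>w\<in>Z. norm w) \<le> (R/4) ^ card Z"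
    using prod_mono[of Z norm "\<lambda>_. R/4"] Zs by simp
  ultimately have "norm (A 0) \<le> M / (3*R/4) ^ card Z * (R/4) ^ card Z"
    by (smt (verit) mult_mono norm_ge_zero prod_nonneg)
  also have "\<dots> = M / 3 ^ card Z"
    using R by (simp add: power_divide field_simps power_mult_distrib)
  finally have "norm (A 0) * 3 ^ card Z \<le> M" by (simp add: field_simps)
  moreover have "norm (A 0) * 2 ^ card Z \<le> norm (A 0) * 3 ^ card Z"
    by (intro mult_left_mono power_mono) auto
  ultimately show ?thesis by linarith
qed

lemma finite_indices_norm_le:
  assumes "filterlim (\<lambda>n. norm (t n)) at_top sequentially"
  shows "finite {n. norm (t n) \<le> r}"
proof -
  obtain N where "\<And>n. n \<ge> N \<Longrightarrow> r + 1 \<le> norm (t n)"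
    using assms by (auto simp: filterlim_at_top eventually_sequentially)
  hence "{n. norm (t n) \<le> r} \<subseteq> {..<N}" by (force simp: not_less[symmetric])
  thus ?thesis by (rule finite_subset) auto
qed

lemma card_zero_indices_le:
  fixes t :: "nat \<Rightarrow> complex" and A :: "complex \<Rightarrow> complex"
  assumes t_inj: "inj t" and t_inf: "filterlim (\<lambda>n. norm (t n)) at_top sequentially"
    and A_entire: "A holomorphic_on UNIV" and A_t: "\<And>n. A (t n) = 0" and A0: "A 0 \<noteq> 0"
    and r: "0 < r" and M: "\<And>z. norm z = 4 * r \<Longrightarrow> norm (A z) \<le> M"
  shows "norm (A 0) * 2 ^ card {n. norm (t n) \<le> r} \<le> M"
proof -
  let ?Z = "t ` {n. norm (t n) \<le> r}"
  have "card ?Z = card {n. norm (t n) \<le> r}"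
    by (rule card_image) (use t_inj in \<open>auto simp: inj_on_def inj_def\<close>)
  moreover have "norm (A 0) * 2 ^ card ?Z \<le> M"
    by (rule card_zeros_in_quarter_disc_le[OF A_entire _ _ A0, of _ "4 * r"])
       (use finite_indices_norm_le[OF t_inf] A_t r M in auto)
  ultimately show ?thesis by simp
qed

lemma card_zeros_le_powr:
  fixes t :: "nat \<Rightarrow> complex" and A :: "complex \<Rightarrow> complex"
  assumes t_inj: "inj t" and t_inf: "filterlim (\<lambda>n. norm (t n)) at_top sequentially"
    and A_entire: "A holomorphic_on UNIV" and A_t: "\<And>n. A (t n) = 0" and A0: "A 0 \<noteq> 0"
    and A_order: "entire_order A < ereal s"
  shows "\<exists>K. \<forall>r\<ge>1. real (card {n. norm (t n) \<le> r}) \<le> K * r powr s"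
proof -
  have "ereal 0 < ereal s"
    using entire_order_nonneg[of A] A_order unfolding zero_ereal_def by (rule order.strict_trans1)
  hence s0: "0 < s" by simp
  obtain R0 where R0: "R0 \<ge> 1" "\<forall>z. R0 \<le> norm z \<longrightarrow> norm (A z) \<le> exp (norm z powr s)"
    using entire_order_less_imp_bound[OF A_order] by blast
  define N where "N = (\<lambda>r. card {n. norm (t n) \<le> r})"
  define K0 where "K0 = (4 powr s + \<bar>ln (norm (A 0))\<bar>) / ln 2"
  have N_mono: "N r \<le> N r'" if "r \<le> r'" for r r'
    unfolding N_def using that by (intro card_mono[OF finite_indices_norm_le[OF t_inf]]) auto
  have N_large: "real (N r) \<le> K0 * r powr s" if r: "r \<ge> R0" for r
  proof -
    have "norm (A z) \<le> exp ((4*r) powr s)" if z: "norm z = 4 * r" for z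
    proof -
      have "R0 \<le> norm z" using R0 r z by simp
      thus ?thesis using R0(2) z by metis
    qed
    hence "norm (A 0) * 2 ^ N r \<le> exp ((4*r) powr s)"
      unfolding N_def using R0 r by (intro card_zero_indices_le[OF t_inj t_inf A_entire A_t A0]) auto
    moreover have "0 < norm (A 0) * 2 ^ N r" using A0 by simp
    ultimately have "ln (norm (A 0) * 2 ^ N r) \<le> (4*r) powr s"
      by (metis ln_le_cancel_iff exp_gt_zero ln_exp)
    hence "ln (norm (A 0)) + N r * ln 2 \<le> 4 powr s * r powr s"
      using A0 r R0 by (simp add: ln_mult ln_realpow powr_mult)
    moreover have "\<bar>ln (norm (A 0))\<bar> \<le> \<bar>ln (norm (A 0))\<bar> * r powr s"
      using r R0 s0 by (simp add: ge_one_powr_ge_zero mult_le_cancel_left1)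
    ultimately have "N r * ln 2 \<le> (4 powr s + \<bar>ln (norm (A 0))\<bar>) * r powr s"
      by (simp add: distrib_right)
    thus ?thesis unfolding K0_def by (simp add: field_simps)
  qed
  have "K0 \<ge> 0" unfolding K0_def by simp
  show ?thesis
  proof (intro exI[of _ "K0 * R0 powr s"] allI impI)
    fix r :: real assume r: "1 \<le> r"
    have powr_ge1: "R0 powr s \<ge> 1" "r powr s \<ge> 1" using R0 r s0 by (auto simp: ge_one_powr_ge_zero)
    have "real (N r) \<le> K0 * max r R0 powr s"
      using N_mono[of r "max r R0"] N_large[of "max r R0"] by simp
    also have "\<dots> \<le> K0 * (R0 powr s * r powr s)"
      using powr_ge1 \<open>K0 \<ge> 0\<close> by (intro mult_left_mono) (auto simp: max_def
            mult_le_cancel_right1 mult_le_cancel_left1)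
    finally show "real (card {n. norm (t n) \<le> r}) \<le> K0 * R0 powr s * r powr s"
      unfolding N_def by (simp add: mult.assoc)
  qed
qed

lemma sum_norm_powr_dyadic_annulus_le:
  fixes t :: "nat \<Rightarrow> complex"
  assumes t_inf: "filterlim (\<lambda>n. norm (t n)) at_top sequentially"
    and K: "\<forall>r\<ge>1. real (card {n. norm (t n) \<le> r}) \<le> K * r powr s" and p: "0 \<le> p"
  shows "(\<Sum>n | 2 ^ J \<le> norm (t n) \<and> norm (t n) < 2 ^ Suc J. norm (t n) powr (-p))
      \<le> K * 2 powr s * (2 powr (s - p)) ^ J"
proof -
  let ?D = "{n. 2 ^ J \<le> norm (t n) \<and> norm (t n) < 2 ^ Suc J}"
  have "(\<Sum>n\<in>?D. norm (t n) powr (-p)) \<le> (\<Sum>n\<in>?D. (2 ^ J) powr (-p))"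
    using p by (intro sum_mono powr_mono2') auto
  also have "\<dots> = card ?D * (2 ^ J) powr (-p)" by simp
  also have "\<dots> \<le> card {n. norm (t n) \<le> 2 ^ Suc J} * (2 ^ J) powr (-p)"
  proof -
    have "card ?D \<le> card {n. norm (t n) \<le> 2 ^ Suc J}"
      by (rule card_mono[OF finite_indices_norm_le[OF t_inf]]) auto
    thus ?thesis by (intro mult_right_mono) auto
  qed
  also have "\<dots> \<le> K * (2 ^ Suc J) powr s * (2 ^ J) powr (-p)"
    using K by (intro mult_right_mono) (auto simp del: power_Suc)
  also have "\<dots> = K * 2 powr s * (2 powr (s - p)) ^ J"
  proof -
    have "(2::real) ^ Suc J = 2 powr (real J + 1)" "(2::real) ^ J = 2 powr real J"
      by (simp_all add: powr_realpow[symmetric] powr_add)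
    thus ?thesis by (simp add: powr_powr powr_add[symmetric] powr_realpow[symmetric] algebra_simps)
  qed
  finally show ?thesis .
qed

lemma summable_norm_powr_if_counting_le:
  fixes t :: "nat \<Rightarrow> complex"
  assumes t_inf: "filterlim (\<lambda>n. norm (t n)) at_top sequentially"
    and K: "\<forall>r\<ge>1. real (card {n. norm (t n) \<le> r}) \<le> K * r powr s"
    and s: "0 < s" "s < p"
  shows "summable (\<lambda>n. norm (t n) powr (-p))"
proof -
  define f where "f = (\<lambda>n. norm (t n) powr (-p))"
  define F where "F = (\<lambda>J::nat. {n. norm (t n) < 2 ^ J})"
  define q where "q = (2::real) powr (s - p)"
  have q: "0 < q" "q < 1" unfolding q_def using s powr_less_mono[of "s-p" 0 2] by auto
  have finF: "finite (F J)" for J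
    unfolding F_def by (rule finite_subset[OF _ finite_indices_norm_le[OF t_inf, of "2^J"]]) auto
  have f0: "0 \<le> f n" for n unfolding f_def by simp
  have K0: "0 \<le> K" using K[rule_format, of 1] by simp
  have partial: "sum f (F J) \<le> sum f (F 0) + K * 2 powr s * (\<Sum>j<J. q ^ j)" for J
  proof (induction J)
    case (Suc J)
    have "F J \<subseteq> F (Suc J)" unfolding F_def by (auto simp: less_le_trans)
    hence "sum f (F (Suc J)) = sum f (F J) + sum f (F (Suc J) - F J)"
      using sum.subset_diff[OF _ finF, of "F J" "Suc J" f] by simp
    moreover have "F (Suc J) - F J = {n. 2 ^ J \<le> norm (t n) \<and> norm (t n) < 2 ^ Suc J}"
      unfolding F_def by auto
    ultimately show ?case
      using Suc sum_norm_powr_dyadic_annulus_le[OF t_inf K, of p J] s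
      unfolding f_def q_def by (simp add: distrib_left)
  qed simp
  have geometric: "K * 2 powr s * (\<Sum>j<J. q ^ j) \<le> K * 2 powr s / (1 - q)" for J
  proof -
    have "(\<Sum>j<J. q ^ j) = (1 - q ^ J) / (1 - q)" using q by (simp add: sum_gp_strict)
    also have "\<dots> \<le> 1 / (1 - q)" using q by (intro divide_right_mono) auto
    finally show ?thesis using K0 by (simp add: mult_left_mono divide_inverse)
  qed
  have F_bound: "sum f (F J) \<le> sum f (F 0) + K * 2 powr s / (1 - q)" for J
    using partial[of J] geometric[of J] by linarith
  show ?thesis unfolding f_def[symmetric]
  proof (rule summableI_nonneg_bounded[OF f0])
    fix N
    obtain J where J: "(\<Sum>i<N. norm (t i)) < 2 ^ J" using real_arch_pow[of 2] by auto
    have "{..<N} \<subseteq> F J"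
    proof
      fix n assume "n \<in> {..<N}"
      hence "norm (t n) \<le> (\<Sum>i<N. norm (t i))"
        using member_le_sum[of n "{..<N}" "\<lambda>i. norm (t i)"] by auto
      thus "n \<in> F J" using J unfolding F_def by simp
    qed
    hence "sum f {..<N} \<le> sum f (F J)" by (intro sum_mono2[OF finF]) (auto simp: f0)
    thus "sum f {..<N} \<le> sum f (F 0) + K * 2 powr s / (1 - q)" using F_bound[of J] by linarith
  qed
qed

lemma exceptional_radii:
  fixes r \<delta> :: "nat \<Rightarrow> real"
  assumes \<delta>_summable: "summable \<delta>" and \<delta>_pos: "\<And>n. 0 < \<delta> n" and r_pos: "\<And>n. 0 < r n"
  obtains E where "E \<subseteq> {0<..}" "E \<in> fmeasurable lborel" "\<And>n. r n \<in> E"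
    "\<And>x n. 0 < x \<Longrightarrow> x \<notin> E \<Longrightarrow> \<delta> n \<le> \<bar>x - r n\<bar>"
proof
  define I where "I = (\<lambda>n. {r n - \<delta> n <..< r n + \<delta> n})"
  define E where "E = {0<..} \<inter> (\<Union>n. I n)"
  show "E \<subseteq> {0<..}" unfolding E_def by auto
  show "r n \<in> E" for n using r_pos[of n] \<delta>_pos[of n] unfolding E_def I_def by (auto intro!: exI[of _ n])
  show "\<delta> n \<le> \<bar>x - r n\<bar>" if "0 < x" "x \<notin> E" for x n
  proof -
    have "x \<notin> I n" using that unfolding E_def by auto
    thus ?thesis unfolding I_def by (auto simp: abs_if)
  qed
  have "emeasure lborel E \<le> emeasure lborel (\<Union>n. I n)"
    unfolding E_def by (intro emeasure_mono) (auto simp: I_def)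
  also have "\<dots> \<le> (\<Sum>n. emeasure lborel (I n))"
    by (rule emeasure_subadditive_countably) (auto simp: I_def)
  also have "\<dots> = (\<Sum>n. ennreal (2 * \<delta> n))"
    using \<delta>_pos by (simp add: I_def less_imp_le)
  also have "\<dots> = ennreal (\<Sum>n. 2 * \<delta> n)"
    using \<delta>_pos \<delta>_summable
    by (intro suminf_ennreal_eq) (auto simp: less_imp_le intro!: summable_sums summable_mult)
  finally have "emeasure lborel E < \<infinity>" by (simp add: le_less_trans)
  thus "E \<in> fmeasurable lborel" unfolding E_def I_def by (intro fmeasurableI) auto
qed

lemma norm_cauchy_term_le:
  fixes z w a :: complex and p :: real and k :: nat
  assumes z1: "1 \<le> norm z" and w0: "w \<noteq> 0" and p: "0 \<le> p"
    and sep: "norm w < 2 * norm z \<Longrightarrow> norm w powr (-p) \<le> \<bar>norm z - norm w\<bar>"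
  shows "norm (a / (w ^ k * (z - w)))
      \<le> (2 powr (1+p) + 2) * norm z powr (1+p) * (norm a / norm w ^ (k+1))"
proof -
  define T Z where "T = norm w" and "Z = norm z"
  define S where "S = norm a / T ^ (k+1)"
  have T: "T > 0" using w0 unfolding T_def by simp
  have S0: "S \<ge> 0" unfolding S_def using T by simp
  have Zp: "Z powr (1+p) \<ge> 1" using z1 p unfolding Z_def by (simp add: ge_one_powr_ge_zero)
  have "norm (a / (w ^ k * (z - w))) = norm a / (T ^ k * norm (z - w))"
    unfolding T_def by (simp add: norm_divide norm_mult norm_power)
  also have "\<dots> \<le> max 2 (2 powr (1+p) * Z powr (1+p)) * S"
  proof (cases "T < 2 * Z")
    case False
    have D: "T / 2 \<le> norm (z - w)"
      using norm_triangle_ineq2[of w z] False unfolding T_def Z_def by (simp add: norm_minus_commute)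
    moreover have "0 < norm (z - w)" using D T by linarith
    ultimately have "norm a / (T ^ k * norm (z - w)) \<le> norm a / (T ^ k * (T / 2))"
      using T by (intro divide_left_mono mult_left_mono) auto
    also have "\<dots> = 2 * S" unfolding S_def using T by (simp add: field_simps)
    also have "\<dots> \<le> max 2 (2 powr (1+p) * Z powr (1+p)) * S" using S0 by (intro mult_right_mono) auto
    finally show ?thesis .
  next
    case True
    have "T powr (-p) \<le> \<bar>Z - T\<bar>" using sep True unfolding T_def Z_def by simp
    also have "\<bar>Z - T\<bar> \<le> norm (z - w)" unfolding Z_def T_def by (rule norm_triangle_ineq3)
    finally have D: "T powr (-p) \<le> norm (z - w)" .
    have "norm a / (T ^ k * norm (z - w)) \<le> norm a / (T ^ k * T powr (-p))"
      using T D by (intro divide_left_mono mult_left_mono mult_pos_pos) auto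
    also have "\<dots> = S * T powr (1+p)"
      unfolding S_def using T by (simp add: powr_add powr_minus field_simps)
    also have "\<dots> \<le> S * (2 * Z) powr (1+p)"
      using True T S0 p by (intro mult_left_mono powr_mono2) auto
    also have "\<dots> = 2 powr (1+p) * Z powr (1+p) * S"
      using z1 unfolding Z_def by (simp add: powr_mult)
    also have "\<dots> \<le> max 2 (2 powr (1+p) * Z powr (1+p)) * S" using S0 by (intro mult_right_mono) auto
    finally show ?thesis .
  qed
  also have "\<dots> \<le> (2 powr (1+p) + 2) * Z powr (1+p) * S"
  proof (intro mult_right_mono[OF _ S0] max.boundedI)
    have "0 \<le> 2 powr (1+p) * Z powr (1+p)" "2 \<le> 2 * Z powr (1+p)" using Zp by simp_all
    thus "2 \<le> (2 powr (1+p) + 2) * Z powr (1+p)" unfolding distrib_right by linarith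
  qed (simp add: distrib_right)
  finally show ?thesis unfolding S_def T_def Z_def .
qed

lemma norm_cauchy_transform_le:
  fixes t a :: "nat \<Rightarrow> complex" and z :: complex and q :: real
  assumes z: "1 \<le> norm z" and t_nz: "\<And>n. t n \<noteq> 0" and q: "0 \<le> q"
    and sep: "\<And>n. norm (t n) < 2 * norm z \<Longrightarrow> norm (t n) powr (-q) \<le> \<bar>norm z - norm (t n)\<bar>"
    and S: "summable (\<lambda>n. norm (a n) / norm (t n) ^ (k + 1))"
  shows "norm (cauchy_transform t a k z)
      \<le> (2 powr (1+q) + 2) * (\<Sum>n. norm (a n) / norm (t n) ^ (k + 1)) * norm z powr (q + real k + 1)"
proof -
  define S where "S = (\<lambda>n. norm (a n) / norm (t n) ^ (k + 1))"
  define K where "K = (2 powr (1+q) + 2) * norm z powr (1+q)"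
  define g where "g = (\<lambda>n. a n / (t n ^ k * (z - t n)))"
  have g_le: "norm (g n) \<le> K * S n" for n
    unfolding g_def K_def S_def by (rule norm_cauchy_term_le[OF z t_nz q sep])
  have KS: "summable (\<lambda>n. K * S n)" using S unfolding S_def by (rule summable_mult)
  have g_summable: "summable (\<lambda>n. norm (g n))"
    using g_le by (intro summable_comparison_test[OF _ KS]) auto
  have "norm (suminf g) \<le> (\<Sum>n. norm (g n))" by (rule summable_norm[OF g_summable])
  also have "\<dots> \<le> (\<Sum>n. K * S n)" by (rule suminf_le[OF g_le g_summable KS])
  also have "\<dots> = K * suminf S" using S unfolding S_def by (rule suminf_mult)
  finally have "norm (cauchy_transform t a k z) \<le> norm z ^ k * (K * suminf S)"
    unfolding cauchy_transform_def g_def by (simp add: norm_mult norm_power mult_left_mono)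
  also have "norm z ^ k = norm z powr real k" using z by (subst powr_realpow) auto
  also have "norm z powr real k * (K * suminf S)
      = (2 powr (1+q) + 2) * suminf S * norm z powr (q + real k + 1)"
    unfolding K_def using z by (simp add: powr_add algebra_simps)
  finally show ?thesis unfolding S_def .
qed

text \<open>The exceptional set consists of the radii within \<open>|t_n|^(-p)\<close> of some \<open>|t_n|\<close>; it has
  finite measure because the zeros have convergence exponent at most the order of \<open>A\<close>.\<close>

lemma cauchy_transforms_bounded_off_exceptional_set:
  fixes t :: "nat \<Rightarrow> complex" and A :: "complex \<Rightarrow> complex"
  assumes t_inj: "inj t" and t_nz: "\<And>n. t n \<noteq> 0"
    and t_inf: "filterlim (\<lambda>n. norm (t n)) at_top sequentially"
    and A_entire: "A holomorphic_on UNIV" and A_t: "\<And>n. A (t n) = 0" and A0: "A 0 \<noteq> 0"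
    and A_order: "entire_order A < ereal p"
  obtains E where "E \<subseteq> {0<..}" "E \<in> fmeasurable lborel" "\<And>n. norm (t n) \<in> E"
    "\<And>k a. summable (\<lambda>n. norm (a n) / norm (t n) ^ (k + 1)) \<Longrightarrow>
       \<exists>C. \<forall>z. 1 \<le> norm z \<and> norm z \<notin> E \<longrightarrow>
         norm (cauchy_transform t a k z) \<le> C * norm z powr (p + real k + 1)"
proof -
  obtain s where s: "entire_order A < ereal s" "ereal s < ereal p"
    using A_order ereal_dense2 by blast
  have "ereal 0 < ereal s"
    using entire_order_nonneg[of A] s(1) unfolding zero_ereal_def by (rule order.strict_trans1)
  hence sp: "0 < s" "s < p" using s(2) by auto
  obtain K where "\<forall>r\<ge>1. real (card {n. norm (t n) \<le> r}) \<le> K * r powr s"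
    using card_zeros_le_powr[OF t_inj t_inf A_entire A_t A0 s(1)] by blast
  hence "summable (\<lambda>n. norm (t n) powr (-p))"
    using summable_norm_powr_if_counting_le[OF t_inf _ sp] by blast
  then obtain E where E: "E \<subseteq> {0<..}" "E \<in> fmeasurable lborel" "\<And>n. norm (t n) \<in> E"
    and sep: "\<And>x n. 0 < x \<Longrightarrow> x \<notin> E \<Longrightarrow> norm (t n) powr (-p) \<le> \<bar>x - norm (t n)\<bar>"
    using exceptional_radii[of "\<lambda>n. norm (t n) powr (-p)" "\<lambda>n. norm (t n)"] t_nz by auto
  show ?thesis
  proof (rule that[OF E])
    fix k and a :: "nat \<Rightarrow> complex" assume "summable (\<lambda>n. norm (a n) / norm (t n) ^ (k + 1))"
    thus "\<exists>C. \<forall>z. 1 \<le> norm z \<and> norm z \<notin> E \<longrightarrow>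
            norm (cauchy_transform t a k z) \<le> C * norm z powr (p + real k + 1)"
      using norm_cauchy_transform_le[OF _ t_nz, of _ p] sp sep by (meson less_le_trans zero_less_one
          less_imp_le)
  qed
qed

lemma zero_density_if_finite_measure:
  assumes E: "E \<in> fmeasurable lborel"
  shows "((\<lambda>R. measure lebesgue (E \<inter> {0<..<R}) / R) \<longlongrightarrow> 0) at_top"
proof (rule tendsto_sandwich[of "\<lambda>_. 0" _ _ "\<lambda>R. measure lborel E / R"])
  have "measure lebesgue (E \<inter> {0<..<R}) = measure lborel (E \<inter> {0<..<R})" for R :: real
    using E by (intro measure_completion) auto
  moreover have "measure lborel (E \<inter> {0<..<R}) \<le> measure lborel E" for R :: real
    using E by (intro measure_mono_fmeasurable) auto
  ultimately have "measure lebesgue (E \<inter> {0<..<R}) / R \<le> measure lborel E / R" if "0 < R" for R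
    using that by (simp add: divide_right_mono)
  thus "eventually (\<lambda>R. measure lebesgue (E \<inter> {0<..<R}) / R \<le> measure lborel E / R) at_top"
    using eventually_gt_at_top[of "0::real"] by (rule eventually_mono[rotated])
  show "((\<lambda>R. measure lborel E / R) \<longlongrightarrow> 0) at_top"
    by (intro tendsto_divide_0[OF tendsto_const] filterlim_at_top_imp_at_infinity filterlim_ident)
qed (auto intro: eventually_mono[OF eventually_gt_at_top[of "0::real"]])

lemma cdb_space_elem_eq_cauchy_transform:
  fixes t :: "nat \<Rightarrow> complex"
  assumes t_inf: "filterlim (\<lambda>n. norm (t n)) at_top sequentially"
    and \<mu>_nonneg: "\<And>n. 0 \<le> \<mu> n" and \<mu>_summable: "summable (\<lambda>n. \<mu> n / ((norm (t n))\<^sup>2 + 1))"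
    and g: "g \<in> cdb_space t A \<mu>"
  obtains b where "summable (\<lambda>n. norm (b n) / norm (t n))"
    "\<forall>z. z \<notin> range t \<longrightarrow> g z = A z * cauchy_transform t b 0 z"
proof -
  obtain a where a2: "summable (\<lambda>n. (norm (a n))\<^sup>2)" and
    g_eq: "\<forall>z. z \<notin> range t \<longrightarrow> g z = A z * (\<Sum>n. a n * complex_of_real (sqrt (\<mu> n)) / (z - t n))"
    using g unfolding cdb_space_def by blast
  define b where "b = (\<lambda>n. a n * complex_of_real (sqrt (\<mu> n)))"
  obtain N where N: "\<And>n. n \<ge> N \<Longrightarrow> 1 \<le> norm (t n)"
    using t_inf unfolding filterlim_at_top eventually_sequentially by blast
  have "summable (\<lambda>n. norm (b n) / norm (t n))"
  proof (rule summable_comparison_test'[of "\<lambda>n. ((norm (a n))\<^sup>2 + 2 * (\<mu> n / ((norm (t n))\<^sup>2 + 1))) / 2" N])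
    show "summable (\<lambda>n. ((norm (a n))\<^sup>2 + 2 * (\<mu> n / ((norm (t n))\<^sup>2 + 1))) / 2)"
      using a2 \<mu>_summable by (intro summable_divide summable_add summable_mult)
    fix n assume "N \<le> n"
    hence T: "1 \<le> norm (t n)" by (rule N)
    define x y where "x = norm (a n)" and "y = sqrt (\<mu> n) / norm (t n)"
    have "norm (norm (b n) / norm (t n)) = x * y"
      unfolding b_def x_def y_def using \<mu>_nonneg[of n] by (simp add: norm_mult)
    also have "\<dots> \<le> (x\<^sup>2 + y\<^sup>2) / 2" using sum_squares_bound[of x y] by simp
    also have "y\<^sup>2 = \<mu> n / (norm (t n))\<^sup>2" unfolding y_def using \<mu>_nonneg[of n] by (simp add: power_divide)
    also have "\<mu> n / (norm (t n))\<^sup>2 \<le> 2 * (\<mu> n / ((norm (t n))\<^sup>2 + 1))"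
    proof -
      have "(norm (t n))\<^sup>2 + 1 \<le> 2 * (norm (t n))\<^sup>2" using one_le_power[OF T, of 2] by simp
      hence "(2 * \<mu> n) / (2 * (norm (t n))\<^sup>2) \<le> (2 * \<mu> n) / ((norm (t n))\<^sup>2 + 1)"
        using \<mu>_nonneg[of n] T by (intro divide_left_mono) (auto intro!: mult_pos_pos add_pos_pos)
      thus ?thesis by simp
    qed
    finally show "norm (norm (b n) / norm (t n))
        \<le> ((norm (a n))\<^sup>2 + 2 * (\<mu> n / ((norm (t n))\<^sup>2 + 1))) / 2"
      unfolding x_def by simp
  qed
  moreover have "\<forall>z. z \<notin> range t \<longrightarrow> g z = A z * cauchy_transform t b 0 z"
    using g_eq unfolding cauchy_transform_def b_def by simp
  ultimately show ?thesis by (rule that)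
qed

lemma exists_radius_not_in_finite_measure_set:
  assumes "E \<in> fmeasurable lborel"
  shows "\<exists>r'. r \<le> r' \<and> r' \<le> r + measure lborel E + 1 \<and> r' \<notin> E"
proof (rule ccontr)
  assume "\<not> ?thesis"
  hence "{r..r + measure lborel E + 1} \<subseteq> E" by auto
  hence "measure lborel {r..r + measure lborel E + 1} \<le> measure lborel E"
    using assms by (intro measure_mono_fmeasurable) auto
  thus False by simp
qed

lemma norm_le_on_cball_if_le_on_sphere:
  fixes g :: "complex \<Rightarrow> complex"
  assumes "g holomorphic_on UNIV" "0 < r" "\<And>w. norm w = r \<Longrightarrow> norm (g w) \<le> B" "norm z \<le> r"
  shows "norm (g z) \<le> B"
proof (rule maximum_modulus_frontier[of g "cball 0 r"])
  show "g holomorphic_on interior (cball 0 r)" using assms(1) by (rule holomorphic_on_subset) auto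
  show "continuous_on (closure (cball 0 r)) g"
    using assms(1) holomorphic_on_imp_continuous_on by (metis continuous_on_subset top_greatest)
qed (use assms in auto)

lemma dominated_growth_on_disc:
  fixes g A :: "complex \<Rightarrow> complex"
  assumes g: "g holomorphic_on UNIV" and E: "E \<in> fmeasurable lborel" and C: "0 \<le> C"
    and dom: "\<forall>z. 1 \<le> norm z \<and> norm z \<notin> E \<longrightarrow> norm (g z) \<le> C * norm z powr q * norm (A z)"
    and r: "1 \<le> r"
  obtains r' where "r \<le> r'" "r' \<le> r + measure lborel E + 1"
    "\<And>B z. (\<And>w. norm w = r' \<Longrightarrow> norm (A w) \<le> B) \<Longrightarrow> norm z \<le> r \<Longrightarrow> norm (g z) \<le> C * r' powr q * B"
proof -
  obtain r' where r': "r \<le> r'" "r' \<le> r + measure lborel E + 1" "r' \<notin> E"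
    using exists_radius_not_in_finite_measure_set[OF E] by blast
  have "norm (g z) \<le> C * r' powr q * B"
    if B: "\<And>w. norm w = r' \<Longrightarrow> norm (A w) \<le> B" and z: "norm z \<le> r" for B and z :: complex
  proof (rule norm_le_on_cball_if_le_on_sphere[OF g])
    show "0 < r'" "norm z \<le> r'" using r r' z by simp_all
    fix w :: complex assume w: "norm w = r'"
    have "norm (g w) \<le> C * norm w powr q * norm (A w)" using dom w r r' by auto
    also have "\<dots> \<le> C * norm w powr q * B" using B w C by (intro mult_left_mono) auto
    finally show "norm (g w) \<le> C * r' powr q * B" using w by simp
  qed
  thus ?thesis using r' that by blast
qed

lemma eventually_le_powr:
  fixes p q e :: real
  assumes "0 < p" "q < p" "0 < e"
  shows "eventually (\<lambda>r::real. c1 + c2 * ln r + c3 * r powr q \<le> e * r powr p) at_top"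
proof -
  have "(\<lambda>r::real. c1 + c2 * ln r + c3 * r powr q) \<in> o(\<lambda>r. r powr p)"
    using assms(1,2) by (intro sum_in_smallo) real_asymp+
  from landau_o.smallD[OF this assms(3)] show ?thesis
    using eventually_gt_at_top[of "0::real"] by eventually_elim auto
qed

lemma exists_powr_factor_le:
  fixes \<rho> \<tau> \<tau>' :: real
  assumes "0 < \<rho>" "0 \<le> \<tau>" "\<tau> < \<tau>'"
  shows "\<exists>\<delta>>0. \<tau> * (1 + \<delta>) powr \<rho> \<le> \<tau>'"
proof (cases "\<tau> = 0")
  case True
  thus ?thesis using assms by (intro exI[of _ 1]) auto
next
  case False
  hence \<tau>: "0 < \<tau>" using assms by simp
  define c where "c = \<tau>' / \<tau>"
  have c: "1 < c" unfolding c_def using \<tau> assms by simp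
  have "c powr 0 < c powr (1/\<rho>)" using c assms by (intro powr_less_mono) auto
  hence "0 < c powr (1/\<rho>) - 1" using c by simp
  moreover have "\<tau> * (1 + (c powr (1/\<rho>) - 1)) powr \<rho> = \<tau>'"
    using c assms \<tau> unfolding c_def by (simp add: powr_powr)
  ultimately show ?thesis by (intro exI[of _ "c powr (1/\<rho>) - 1"]) auto
qed

text \<open>Since the enlarged radius is \<open>r + L \<le> (1 + \<delta>) r\<close> for large \<open>r\<close>, the polynomial factor and
  the factor \<open>(1 + \<delta>)^\<rho>\<close> are absorbed by any increase of the type.\<close>

lemma exp_bound_if_dominated:
  fixes g A :: "complex \<Rightarrow> complex"
  assumes g: "g holomorphic_on UNIV" and E: "E \<in> fmeasurable lborel" and q: "0 \<le> q"
    and C: "0 < C"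
    and dom: "\<forall>z. 1 \<le> norm z \<and> norm z \<notin> E \<longrightarrow> norm (g z) \<le> C * norm z powr q * norm (A z)"
    and \<rho>: "0 < \<rho>" and \<tau>: "0 \<le> \<tau>" "\<tau> < \<tau>'"
    and A_bound: "\<forall>z. R \<le> norm z \<longrightarrow> norm (A z) \<le> exp (\<tau> * norm z powr \<rho>)"
  shows "\<exists>R'. \<forall>z. R' \<le> norm z \<longrightarrow> norm (g z) \<le> exp (\<tau>' * norm z powr \<rho>)"
proof -
  define L where "L = measure lborel E + 1"
  define \<tau>'' where "\<tau>'' = (\<tau> + \<tau>') / 2"
  have \<tau>'': "\<tau> < \<tau>''" "\<tau>'' < \<tau>'" using \<tau> unfolding \<tau>''_def by auto
  obtain \<delta> where \<delta>: "\<delta> > 0" "\<tau> * (1 + \<delta>) powr \<rho> \<le> \<tau>''"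
    using exists_powr_factor_le[OF \<rho> \<tau>(1) \<tau>''(1)] by blast
  have "eventually (\<lambda>r. (ln C + q * ln (1+\<delta>)) + q * ln r + 0 * r powr 0 \<le> (\<tau>' - \<tau>'') * r powr \<rho>)
      at_top"
    by (rule eventually_le_powr) (use \<rho> \<tau>'' in auto)
  then obtain R0 where R0: "\<And>r. r \<ge> R0 \<Longrightarrow>
      (ln C + q * ln (1+\<delta>)) + q * ln r \<le> (\<tau>' - \<tau>'') * r powr \<rho>"
    unfolding eventually_at_top_linorder by auto
  show ?thesis
  proof (intro exI[of _ "max (max R0 R) (max (L/\<delta>) 1)"] allI impI)
    fix z :: complex assume z: "max (max R0 R) (max (L/\<delta>) 1) \<le> norm z"
    define r where "r = norm z"
    have r: "r \<ge> 1" "r \<ge> R0" "r \<ge> R" "L \<le> \<delta> * r"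
      using z \<delta>(1) unfolding r_def by (auto simp: field_simps)
    obtain r' where r': "r \<le> r'" "r' \<le> r + measure lborel E + 1" and
      disc: "\<And>B z. (\<And>w. norm w = r' \<Longrightarrow> norm (A w) \<le> B) \<Longrightarrow> norm z \<le> r \<Longrightarrow>
               norm (g z) \<le> C * r' powr q * B"
      by (rule dominated_growth_on_disc[OF g E less_imp_le[OF C] dom r(1)]) blast
    have r'_le: "r' \<le> (1+\<delta>) * r" using r' r(4) unfolding L_def by (simp add: algebra_simps)
    have "\<tau> * r' powr \<rho> \<le> \<tau> * ((1+\<delta>) * r) powr \<rho>"
      using r r' r'_le \<rho> \<tau> by (intro mult_left_mono powr_mono2) auto
    also have "\<dots> = (\<tau> * (1+\<delta>) powr \<rho>) * r powr \<rho>" using \<delta> r by (simp add: powr_mult)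
    also have "\<dots> \<le> \<tau>'' * r powr \<rho>" using \<delta>(2) by (intro mult_right_mono) auto
    finally have exponent_le: "\<tau> * r' powr \<rho> \<le> \<tau>'' * r powr \<rho>" .
    have "norm (g z) \<le> C * r' powr q * exp (\<tau> * r' powr \<rho>)"
      by (rule disc) (use A_bound r r' r_def in auto)
    also have "\<dots> \<le> C * ((1+\<delta>) * r) powr q * exp (\<tau>'' * r powr \<rho>)"
      using r r' r'_le q C exponent_le by (intro mult_mono mult_left_mono powr_mono2) auto
    also have "\<dots> = exp (ln C) * exp (q * ln ((1+\<delta>) * r)) * exp (\<tau>'' * r powr \<rho>)"
      using C r \<delta> by (simp add: powr_def)
    also have "\<dots> = exp ((ln C + q * ln (1+\<delta>)) + q * ln r + \<tau>'' * r powr \<rho>)"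
      using r \<delta> by (simp add: exp_add[symmetric] ln_mult distrib_left)
    also have "\<dots> \<le> exp (\<tau>' * r powr \<rho>)" using R0[of r] r by (simp add: algebra_simps)
    finally show "norm (g z) \<le> exp (\<tau>' * norm z powr \<rho>)" unfolding r_def .
  qed
qed

lemma entire_order_le_if_dominated:
  fixes g A :: "complex \<Rightarrow> complex"
  assumes g: "g holomorphic_on UNIV" and E: "E \<in> fmeasurable lborel" and q: "0 \<le> q"
    and C: "0 < C"
    and dom: "\<forall>z. 1 \<le> norm z \<and> norm z \<notin> E \<longrightarrow> norm (g z) \<le> C * norm z powr q * norm (A z)"
  shows "entire_order g \<le> entire_order A"
proof (rule dense_ge)
  fix y assume y: "entire_order A < y"
  show "entire_order g \<le> y"
  proof (cases y)
    case (real s)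
    obtain s' where s': "entire_order A < ereal s'" "ereal s' < ereal s"
      using y real ereal_dense2 by blast
    have "ereal 0 < ereal s'"
      using entire_order_nonneg[of A] s'(1) unfolding zero_ereal_def by (rule order.strict_trans1)
    hence s'_pos: "0 < s'" and "s' < s" using s'(2) by auto
    obtain RA where RA: "\<forall>z. RA \<le> norm z \<longrightarrow> norm (A z) \<le> exp (1 * norm z powr s')"
      using entire_order_less_imp_bound[OF s'(1)] by auto
    have "\<exists>Rg. \<forall>z. Rg \<le> norm z \<longrightarrow> norm (g z) \<le> exp (2 * norm z powr s')"
      by (rule exp_bound_if_dominated[OF g E q C dom s'_pos _ _ RA]) auto
    then obtain Rg where Rg: "\<forall>z. Rg \<le> norm z \<longrightarrow> norm (g z) \<le> exp (2 * norm z powr s')"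
      by blast
    have "eventually (\<lambda>r. 0 + 0 * ln r + 2 * r powr s' \<le> 1 * r powr s) at_top"
      by (rule eventually_le_powr) (use s'_pos \<open>s' < s\<close> in auto)
    then obtain R0 where R0: "\<And>r. r \<ge> R0 \<Longrightarrow> 2 * r powr s' \<le> r powr s"
      unfolding eventually_at_top_linorder by auto
    have "\<forall>z. max Rg R0 \<le> norm z \<longrightarrow> norm (g z) \<le> exp (norm z powr s)"
    proof (intro allI impI)
      fix z :: complex assume z: "max Rg R0 \<le> norm z"
      hence "norm (g z) \<le> exp (2 * norm z powr s')" using Rg by auto
      also have "\<dots> \<le> exp (norm z powr s)" using R0[of "norm z"] z by simp
      finally show "norm (g z) \<le> exp (norm z powr s)" .
    qed
    moreover have "0 \<le> s" using s'_pos \<open>s' < s\<close> by simp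
    ultimately have "entire_order g \<le> ereal s"
      unfolding entire_order_def by (intro INF_lower) blast
    thus ?thesis using real by simp
  qed (use y in simp_all)
qed

lemma entire_type_le_if_dominated:
  fixes g A :: "complex \<Rightarrow> complex"
  assumes g: "g holomorphic_on UNIV" and E: "E \<in> fmeasurable lborel" and q: "0 \<le> q"
    and C: "0 < C"
    and dom: "\<forall>z. 1 \<le> norm z \<and> norm z \<notin> E \<longrightarrow> norm (g z) \<le> C * norm z powr q * norm (A z)"
    and A: "A holomorphic_on UNIV" and A_nonconst: "A \<zeta> \<noteq> A \<xi>" and \<rho>: "0 \<le> \<rho>"
  shows "entire_type \<rho> g \<le> entire_type \<rho> A"
proof (cases "\<rho> = 0")
  case True
  have no_A_type: "{\<tau>. 0 \<le> \<tau> \<and> (\<exists>R. \<forall>z. R \<le> norm z \<longrightarrow> norm (A z) \<le> exp (\<tau> * norm z powr 0))} = {}"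
  proof (rule ccontr)
    assume "\<not> ?thesis"
    then obtain \<tau> R where R: "\<forall>z. R \<le> norm z \<longrightarrow> norm (A z) \<le> exp (\<tau> * norm z powr 0)" by auto
    have "A w = (\<Sum>k\<le>0. (deriv ^^ k) A 0 / fact k * w ^ k)" for w
    proof (rule Liouville_polynomial[OF A, of "max R 1" "exp \<tau>"])
      fix z :: complex assume "max R 1 \<le> norm z"
      hence "z \<noteq> 0" "R \<le> norm z" by auto
      thus "norm (A z) \<le> exp \<tau> * norm z ^ 0" using R by auto
    qed
    hence "A w = A 0" for w by simp
    thus False using A_nonconst by metis
  qed
  show ?thesis unfolding entire_type_def True no_A_type by simp
next
  case False
  hence \<rho>: "0 < \<rho>" using \<rho> by simp
  show ?thesis unfolding entire_type_def
  proof (rule INF_greatest, rule dense_ge)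
    fix \<tau> y
    assume "\<tau> \<in> {\<tau>. 0 \<le> \<tau> \<and> (\<exists>R. \<forall>z. R \<le> norm z \<longrightarrow> norm (A z) \<le> exp (\<tau> * norm z powr \<rho>))}"
      and y: "ereal \<tau> < y"
    then obtain R where \<tau>: "0 \<le> \<tau>" and R: "\<forall>z. R \<le> norm z \<longrightarrow> norm (A z) \<le> exp (\<tau> * norm z powr \<rho>)"
      by auto
    show "(INF \<tau>\<in>{\<tau>. 0 \<le> \<tau> \<and> (\<exists>R. \<forall>z. R \<le> norm z \<longrightarrow> norm (g z) \<le> exp (\<tau> * norm z powr \<rho>))}.
             ereal \<tau>) \<le> y"
    proof (cases y)
      case (real \<tau>')
      hence "\<tau> < \<tau>'" using y by simp
      hence "\<exists>R'. \<forall>z. R' \<le> norm z \<longrightarrow> norm (g z) \<le> exp (\<tau>' * norm z powr \<rho>)"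
        using exp_bound_if_dominated[OF g E q C dom \<rho> \<tau> _ R] by blast
      thus ?thesis unfolding real using \<tau> \<open>\<tau> < \<tau>'\<close> by (intro INF_lower) auto
    qed (use y in simp_all)
  qed
qed

lemma multiples_of_cauchy_transforms_bounded_off_density_zero_set:
  fixes t :: "nat \<Rightarrow> complex" and A :: "complex \<Rightarrow> complex"
  assumes t_inj: "inj t" and t_nz: "\<And>n. t n \<noteq> 0"
    and t_inf: "filterlim (\<lambda>n. norm (t n)) at_top sequentially"
    and A_entire: "A holomorphic_on UNIV" and A_t: "\<And>n. A (t n) = 0" and A0: "A 0 \<noteq> 0"
    and A_order: "entire_order A = ereal \<rho>" and \<epsilon>: "0 < \<epsilon>"
  shows "\<exists>E::real set. E \<subseteq> {0<..} \<and> E \<in> sets lebesgue \<and>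
        ((\<lambda>R. measure lebesgue (E \<inter> {0<..<R}) / R) \<longlongrightarrow> 0) at_top \<and>
        (\<forall>(k::nat) (a::nat \<Rightarrow> complex) (f::complex \<Rightarrow> complex).
           summable (\<lambda>n. norm (a n) / norm (t n) ^ (k + 1)) \<and>
           f holomorphic_on UNIV \<and>
           (\<forall>z. z \<notin> range t \<longrightarrow> f z = A z * cauchy_transform t a k z)
           \<longrightarrow> (\<exists>C::real. \<forall>z. 1 \<le> norm z \<and> norm z \<notin> E \<longrightarrow>
                 norm (f z) \<le> C * norm z powr (\<rho> + real k + 1 + \<epsilon>) * norm (A z)))"
proof -
  have "entire_order A < ereal (\<rho> + \<epsilon>)" using A_order \<epsilon> by simp
  then obtain E where E: "E \<subseteq> {0<..}" "E \<in> fmeasurable lborel" "\<And>n. norm (t n) \<in> E"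
    and bound: "\<And>k a. summable (\<lambda>n. norm (a n) / norm (t n) ^ (k + 1)) \<Longrightarrow>
       \<exists>C. \<forall>z. 1 \<le> norm z \<and> norm z \<notin> E \<longrightarrow>
         norm (cauchy_transform t a k z) \<le> C * norm z powr (\<rho> + \<epsilon> + real k + 1)"
    by (rule cauchy_transforms_bounded_off_exceptional_set[OF t_inj t_nz t_inf A_entire A_t A0]) blast
  have "\<exists>C. \<forall>z. 1 \<le> norm z \<and> norm z \<notin> E \<longrightarrow>
      norm (f z) \<le> C * norm z powr (\<rho> + real k + 1 + \<epsilon>) * norm (A z)"
    if a: "summable (\<lambda>n. norm (a n) / norm (t n) ^ (k + 1))"
      and f: "\<forall>z. z \<notin> range t \<longrightarrow> f z = A z * cauchy_transform t a k z" for k a f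
  proof -
    obtain C where C: "\<forall>z. 1 \<le> norm z \<and> norm z \<notin> E \<longrightarrow>
        norm (cauchy_transform t a k z) \<le> C * norm z powr (\<rho> + \<epsilon> + real k + 1)"
      using bound[OF a] by blast
    have "norm (f z) \<le> C * norm z powr (\<rho> + real k + 1 + \<epsilon>) * norm (A z)"
      if z: "1 \<le> norm z" "norm z \<notin> E" for z
    proof -
      have "z \<notin> range t" using E(3) z(2) by auto
      hence "norm (f z) = norm (A z) * norm (cauchy_transform t a k z)" using f by (simp add: norm_mult)
      also have "\<dots> \<le> norm (A z) * (C * norm z powr (\<rho> + \<epsilon> + real k + 1))"
        using C z by (intro mult_left_mono) auto
      finally show ?thesis by (simp add: algebra_simps)
    qed
    thus ?thesis by blast
  qed
  moreover have "E \<in> sets lebesgue" using fmeasurableD[OF E(2)] by simp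
  ultimately show ?thesis using E(1) zero_density_if_finite_measure[OF E(2)] by blast
qed

lemma cdb_space_order_type_le:
  fixes t :: "nat \<Rightarrow> complex" and A :: "complex \<Rightarrow> complex"
  assumes t_inj: "inj t" and t_nz: "\<And>n. t n \<noteq> 0"
    and t_inf: "filterlim (\<lambda>n. norm (t n)) at_top sequentially"
    and A_entire: "A holomorphic_on UNIV" and A_t: "\<And>n. A (t n) = 0" and A0: "A 0 \<noteq> 0"
    and A_order: "entire_order A = ereal \<rho>"
    and \<mu>_nonneg: "\<And>n. 0 \<le> \<mu> n" and \<mu>_summable: "summable (\<lambda>n. \<mu> n / ((norm (t n))\<^sup>2 + 1))"
    and g: "g \<in> cdb_space t A \<mu>"
  shows "entire_order g \<le> ereal \<rho> \<and> entire_type \<rho> g \<le> entire_type \<rho> A"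
proof -
  have \<rho>: "0 \<le> \<rho>" using entire_order_nonneg[of A] A_order by (simp add: zero_ereal_def)
  have g_entire: "g holomorphic_on UNIV" using g unfolding cdb_space_def by blast
  obtain b where b: "summable (\<lambda>n. norm (b n) / norm (t n))"
    and g_eq: "\<forall>z. z \<notin> range t \<longrightarrow> g z = A z * cauchy_transform t b 0 z"
    by (rule cdb_space_elem_eq_cauchy_transform[OF t_inf \<mu>_nonneg \<mu>_summable g])
  have "entire_order A < ereal (\<rho> + 1)" using A_order by simp
  then obtain E where E: "E \<in> fmeasurable lborel" "\<And>n. norm (t n) \<in> E"
    and bound: "\<And>k a. summable (\<lambda>n. norm (a n) / norm (t n) ^ (k + 1)) \<Longrightarrow>
       \<exists>C. \<forall>z. 1 \<le> norm z \<and> norm z \<notin> E \<longrightarrow>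
         norm (cauchy_transform t a k z) \<le> C * norm z powr (\<rho> + 1 + real k + 1)"
    by (rule cauchy_transforms_bounded_off_exceptional_set[OF t_inj t_nz t_inf A_entire A_t A0]) blast
  obtain C0 where C0: "\<forall>z. 1 \<le> norm z \<and> norm z \<notin> E \<longrightarrow>
      norm (cauchy_transform t b 0 z) \<le> C0 * norm z powr (\<rho> + 2)"
    using bound[of b 0] b by (auto simp: add.assoc)
  define C where "C = max C0 1"
  have dom: "\<forall>z. 1 \<le> norm z \<and> norm z \<notin> E \<longrightarrow> norm (g z) \<le> C * norm z powr (\<rho> + 2) * norm (A z)"
  proof (intro allI impI)
    fix z :: complex assume z: "1 \<le> norm z \<and> norm z \<notin> E"
    hence "z \<notin> range t" using E(2) by auto
    hence "norm (g z) = norm (A z) * norm (cauchy_transform t b 0 z)" using g_eq by (simp add: norm_mult)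
    also have "\<dots> \<le> norm (A z) * (C0 * norm z powr (\<rho> + 2))" using C0 z by (intro mult_left_mono) auto
    also have "\<dots> \<le> norm (A z) * (C * norm z powr (\<rho> + 2))"
      unfolding C_def by (intro mult_left_mono mult_right_mono) auto
    finally show "norm (g z) \<le> C * norm z powr (\<rho> + 2) * norm (A z)" by (simp add: algebra_simps)
  qed
  have A_nonconst: "A 0 \<noteq> A (t 0)" using A0 A_t by simp
  show ?thesis
  proof
    show "entire_order g \<le> ereal \<rho>"
      using entire_order_le_if_dominated[OF g_entire E(1) _ _ dom] \<rho> A_order by (simp add: C_def)
    show "entire_type \<rho> g \<le> entire_type \<rho> A"
      by (rule entire_type_le_if_dominated[OF g_entire E(1) _ _ dom A_entire A_nonconst \<rho>])
        (use \<rho> in \<open>simp_all add: C_def\<close>)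
  qed
qed

theorem lemma2p5:
  fixes t :: "nat \<Rightarrow> complex" and A :: "complex \<Rightarrow> complex" and \<rho> :: real
  assumes t_inj: "inj t"
    and t_nz: "\<And>n. t n \<noteq> 0"
    and t_inf: "filterlim (\<lambda>n. norm (t n)) at_top sequentially"
    and A_entire: "A holomorphic_on UNIV"
    and A_order: "entire_order A = ereal \<rho>"
    and A_zeros: "{z. A z = 0} = range t"
  shows
    "(\<forall>\<epsilon>>0. \<exists>E::real set. E \<subseteq> {0<..} \<and> E \<in> sets lebesgue \<and>
        ((\<lambda>R. measure lebesgue (E \<inter> {0<..<R}) / R) \<longlongrightarrow> 0) at_top \<and>
        (\<forall>(k::nat) (a::nat \<Rightarrow> complex) (f::complex \<Rightarrow> complex).
           summable (\<lambda>n. norm (a n) / norm (t n) ^ (k + 1)) \<and>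
           f holomorphic_on UNIV \<and>
           (\<forall>z. z \<notin> range t \<longrightarrow> f z = A z * cauchy_transform t a k z)
           \<longrightarrow> (\<exists>C::real. \<forall>z. 1 \<le> norm z \<and> norm z \<notin> E \<longrightarrow>
                 norm (f z) \<le> C * norm z powr (\<rho> + real k + 1 + \<epsilon>) * norm (A z))))
     \<and>
     (\<forall>\<mu>::nat \<Rightarrow> real.
        (\<forall>n. 0 < \<mu> n) \<and> summable (\<lambda>n. \<mu> n / ((norm (t n))\<^sup>2 + 1)) \<and>
        (\<forall>n. deriv A (t n) \<noteq> 0)
        \<longrightarrow> (\<forall>g \<in> cdb_space t A \<mu>.
               entire_order g \<le> ereal \<rho> \<and> entire_type \<rho> g \<le> entire_type \<rho> A))"
proof -
  have A_t: "\<And>n. A (t n) = 0" using A_zeros by auto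
  have "0 \<notin> range t" using t_nz by (metis rangeE)
  hence A0: "A 0 \<noteq> 0" using A_zeros by blast
  note growth = multiples_of_cauchy_transforms_bounded_off_density_zero_set
      [OF t_inj t_nz t_inf A_entire A_t A0 A_order]
    and cdb = cdb_space_order_type_le[OF t_inj t_nz t_inf A_entire A_t A0 A_order]
  show ?thesis
  proof (intro conjI allI impI ballI, goal_cases)
    case (1 \<epsilon>)
    thus ?case by (rule growth)
  next
    case (2 \<mu> g)
    thus ?case using cdb[of \<mu> g, OF less_imp_le] by blast
  next
    case (3 \<mu> g)
    thus ?case using cdb[of \<mu> g, OF less_imp_le] by blast
  qed
qed

end
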